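(* Let $k_0\ge 0$ and $c\in\mathbb{R}$ with $|c|<\sqrt{1+k_0^2}$. The circles in $\mathbb{S}^2$ of constant geodesic curvature $k_0$ which are not parallels (i.e. not of the form $\{z=\text{const}\}$) are the only arc-length parametrized spherical curves $\xi=(x,y,z)$ (up to rotations around the $z$-axis) whose spherical angular momentum, as a function of $z$, is $\mathcal K(z)=k_0z+c$.
   Context: For an arc-length parametrized curve $\xi=(x,y,z)$ in the unit sphere $\mathbb{S}^2\subset\mathbb{R}^3$, its spherical angular momentum is $\mathcal K=\dot x\,y-x\,\dot y=-\det(\xi,\dot\xi,(0,0,1))$, where the dot denotes the derivative with respect to arc length; its geodesic curvature is $\kappa=\det(\xi,\dot\xi,\ddot\xi)$. *)

theory Defs
  imports "HOL-Analysis.Analysis"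
begin

text \<open>Points of R^3 are modelled as real^3 with coordinates x = p$1, y = p$2, z = p$3.\<close>

definition sph_ang_mom :: "real^3 \<Rightarrow> real^3 \<Rightarrow> real" where
  "sph_ang_mom p v = v$1 * p$2 - p$1 * v$2"

definition geod_curv :: "real^3 \<Rightarrow> real^3 \<Rightarrow> real^3 \<Rightarrow> real" where
  "geod_curv p v a = det (vector [p, v, a] :: real^3^3)"

end

theory Submission
  imports Defs
begin

text \<open>For a unit-speed curve \<xi> on the unit sphere with geodesic curvature \<kappa>, the vector
  m = k0 \<xi> + \<xi> \<times> \<xi>' has derivative (k0 - \<kappa>) \<xi>', length sqrt (1 + k0^2), and satisfies
  \<xi> \<bullet> m = k0 and K = k0 z - m_3.
  If K = k0 z + c, then m_3 is constant, so (k0 - \<kappa>) z' = 0; as z is nowhere locally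
  constant and \<kappa> is continuous, \<kappa> = k0. Then m is constant and the curve lies on the
  circle \<xi> \<bullet> m = k0. Conversely, if \<kappa> = k0 then m is constant, K = k0 z - m_3, and
  |m_3| < |m| because otherwise z would be constant.\<close>

unbundle cross3_syntax

lemma has_vector_derivative_eq_0_if_constant_on_open:
  fixes f :: "real \<Rightarrow> 'b::real_normed_vector"
  assumes "(f has_vector_derivative D) (at t)" "open S" "t \<in> S" "\<And>s. s \<in> S \<Longrightarrow> f s = c"
  shows "D = 0"
proof -
  have "(f has_vector_derivative 0) (at t)"
    using has_vector_derivative_const assms(2,3)
    by (rule has_vector_derivative_transform_within_open) (simp add: assms(4))
  with assms(1) show ?thesis
    by (rule vector_derivative_unique_at)
qed

lemma eq_on_interval_if_derivative_vanishes_off_eq: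
  fixes f z z' :: "real \<Rightarrow> real"
  assumes f: "continuous_on {a<..<b} f"
    and z: "\<And>t. t \<in> {a<..<b} \<Longrightarrow> (z has_real_derivative z' t) (at t)"
    and z'_eq_0: "\<And>t. t \<in> {a<..<b} \<Longrightarrow> f t \<noteq> y \<Longrightarrow> z' t = 0"
    and nonconst: "\<And>u v. a \<le> u \<Longrightarrow> u < v \<Longrightarrow> v \<le> b \<Longrightarrow> \<not> z constant_on {u<..<v}"
    and t: "t \<in> {a<..<b}"
  shows "f t = y"
proof (rule ccontr)
  assume "f t \<noteq> y"
  moreover have "isCont f t"
    using f t continuous_on_eq_continuous_at[OF open_greaterThanLessThan] by blast
  ultimately obtain e where "e > 0" and e: "\<And>s. dist t s < e \<Longrightarrow> f s \<noteq> y"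
    using continuous_at_avoid by blast
  define r where "r = min e (min (t - a) (b - t))"
  have "r > 0" "r \<le> e" "a \<le> t - r" "t + r \<le> b"
    using \<open>e > 0\<close> t by (auto simp: r_def)
  have near_t: "t' \<in> {a<..<b} \<and> f t' \<noteq> y" if "t' \<in> {t - r<..<t + r}" for t'
    using that e[of t'] \<open>r \<le> e\<close> \<open>a \<le> t - r\<close> \<open>t + r \<le> b\<close>
    by (auto simp: dist_real_def abs_less_iff)
  have "z constant_on {t - r<..<t + r}"
    unfolding constant_on_def
  proof (rule has_field_derivative_zero_constant)
    fix s assume "s \<in> {t - r<..<t + r}"
    with near_t z z'_eq_0 show "(z has_real_derivative 0) (at s within {t - r<..<t + r})"
      by (metis has_field_derivative_at_within)
  qed simp
  with nonconst \<open>r > 0\<close> \<open>a \<le> t - r\<close> \<open>t + r \<le> b\<close> show False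
    by simp
qed

lemma abs_component_less_norm_if_nonconstant:
  fixes c :: "real^3" and p :: "'a \<Rightarrow> real^3"
  assumes "c \<noteq> 0" "\<And>t. t \<in> S \<Longrightarrow> p t \<bullet> c = k" "\<not> (\<lambda>t. p t $ 3) constant_on S"
  shows "\<bar>c $ 3\<bar> < norm c"
proof -
  have "\<bar>c $ 3\<bar> \<noteq> norm c"
  proof
    assume eq: "\<bar>c $ 3\<bar> = norm c"
    have "(c$1)\<^sup>2 + (c$2)\<^sup>2 + (c$3)\<^sup>2 = (norm c)\<^sup>2"
      unfolding power2_norm_eq_inner by (simp add: inner_vec_def sum_3 power2_eq_square)
    also have "\<dots> = (c$3)\<^sup>2"
      by (simp flip: eq)
    finally have "(c$1)\<^sup>2 + (c$2)\<^sup>2 + (c$3)\<^sup>2 = (c$3)\<^sup>2" .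
    then have "c$1 = 0" "c$2 = 0"
      by (simp_all add: sum_power2_eq_zero_iff)
    moreover have "c$3 \<noteq> 0"
      using eq assms(1) by (metis abs_0 norm_eq_zero)
    ultimately have "p t $ 3 = k / c$3" if "t \<in> S" for t
      using assms(2)[OF that] by (simp add: inner_vec_def sum_3 field_simps)
    with assms(3) show False
      unfolding constant_on_def by blast
  qed
  then show ?thesis
    using component_le_norm_cart[of c 3] by simp
qed

lemma cross_eq_scaleR_if_orthogonal:
  fixes x v w :: "real^3"
  assumes "v \<bullet> v = 1" "x \<bullet> v = 0" "v \<bullet> w = 0"
  shows "x \<times> w = - (x \<bullet> (v \<times> w)) *\<^sub>R v"
proof -
  have "v \<times> (x \<times> w) = 0"
    using Lagrange[of v x w] assms by (simp add: inner_commute)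
  then have "x \<times> w = (v \<bullet> (x \<times> w)) *\<^sub>R v"
    using Lagrange[of v v "x \<times> w"] assms(1) by simp
  also have "v \<bullet> (x \<times> w) = - (x \<bullet> (v \<times> w))"
    by (simp add: cross3_simps)
  finally show ?thesis .
qed

lemma geod_curv_eq_triple_product: "geod_curv p v w = p \<bullet> (v \<times> w)"
  unfolding geod_curv_def by (rule dot_cross_det[symmetric])

text \<open>For the circle of geodesic curvature k through p with unit tangent v, this is
  sqrt (1 + k^2) times the unit normal of the plane of the circle.\<close>
definition circle_axis :: "real \<Rightarrow> real^3 \<Rightarrow> real^3 \<Rightarrow> real^3" where
  "circle_axis k p v = k *\<^sub>R p + p \<times> v"

lemma sph_ang_mom_eq_circle_axis: "sph_ang_mom p v = k * p $ 3 - circle_axis k p v $ 3"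
  unfolding circle_axis_def sph_ang_mom_def by (simp add: cross_components)

lemma inner_position_circle_axis:
  assumes "norm p = 1"
  shows "p \<bullet> circle_axis k p v = k"
  unfolding circle_axis_def using assms by (simp add: inner_add_right dot_cross_self norm_eq_1)

lemma norm_circle_axis:
  assumes "norm p = 1" "norm v = 1" "p \<bullet> v = 0"
  shows "norm (circle_axis k p v) = sqrt (1 + k\<^sup>2)"
proof -
  have "(p \<times> v) \<bullet> (p \<times> v) = 1"
    using dot_cross[of p v p v] assms by (simp add: inner_commute norm_eq_1)
  then have "circle_axis k p v \<bullet> circle_axis k p v = 1 + k\<^sup>2"
    unfolding circle_axis_def using assms(1)
    by (simp add: inner_add_left inner_add_right inner_commute power2_eq_square norm_eq_1
        dot_cross_self)
  then show ?thesis
    by (simp add: norm_eq_sqrt_inner)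
qed

locale unit_speed_spherical_curve =
  fixes a b :: real and \<xi> \<xi>' \<xi>'' :: "real \<Rightarrow> real^3"
  assumes velocity: "\<And>t. t \<in> {a<..<b} \<Longrightarrow> (\<xi> has_vector_derivative \<xi>' t) (at t)"
    and acceleration: "\<And>t. t \<in> {a<..<b} \<Longrightarrow> (\<xi>' has_vector_derivative \<xi>'' t) (at t)"
    and on_sphere: "\<And>t. t \<in> {a<..<b} \<Longrightarrow> norm (\<xi> t) = 1"
    and unit_speed: "\<And>t. t \<in> {a<..<b} \<Longrightarrow> norm (\<xi>' t) = 1"
begin

lemma inner_position_velocity:
  assumes t: "t \<in> {a<..<b}"
  shows "\<xi> t \<bullet> \<xi>' t = 0"
proof -
  have "((\<lambda>t. \<xi> t \<bullet> \<xi> t) has_vector_derivative \<xi> t \<bullet> \<xi>' t + \<xi>' t \<bullet> \<xi> t) (at t)"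
    using bounded_bilinear_inner velocity[OF t] velocity[OF t]
    by (rule bounded_bilinear.has_vector_derivative)
  then have "\<xi> t \<bullet> \<xi>' t + \<xi>' t \<bullet> \<xi> t = 0"
    by (rule has_vector_derivative_eq_0_if_constant_on_open[where S = "{a<..<b}" and c = 1])
      (use t on_sphere in \<open>auto simp: norm_eq_1\<close>)
  then show ?thesis
    by (simp add: inner_commute)
qed

lemma inner_velocity_acceleration:
  assumes t: "t \<in> {a<..<b}"
  shows "\<xi>' t \<bullet> \<xi>'' t = 0"
proof -
  have "((\<lambda>t. \<xi>' t \<bullet> \<xi>' t) has_vector_derivative \<xi>' t \<bullet> \<xi>'' t + \<xi>'' t \<bullet> \<xi>' t) (at t)"
    using bounded_bilinear_inner acceleration[OF t] acceleration[OF t]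
    by (rule bounded_bilinear.has_vector_derivative)
  then have "\<xi>' t \<bullet> \<xi>'' t + \<xi>'' t \<bullet> \<xi>' t = 0"
    by (rule has_vector_derivative_eq_0_if_constant_on_open[where S = "{a<..<b}" and c = 1])
      (use t unit_speed in \<open>auto simp: norm_eq_1\<close>)
  then show ?thesis
    by (simp add: inner_commute)
qed

lemma has_vector_derivative_circle_axis:
  assumes t: "t \<in> {a<..<b}"
  shows "((\<lambda>t. circle_axis k (\<xi> t) (\<xi>' t))
           has_vector_derivative (k - geod_curv (\<xi> t) (\<xi>' t) (\<xi>'' t)) *\<^sub>R \<xi>' t) (at t)"
proof -
  have "((\<lambda>t. circle_axis k (\<xi> t) (\<xi>' t))
          has_vector_derivative k *\<^sub>R \<xi>' t + (\<xi> t \<times> \<xi>'' t + \<xi>' t \<times> \<xi>' t)) (at t)"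
    unfolding circle_axis_def
    by (intro has_vector_derivative_add velocity[OF t]
        bounded_linear.has_vector_derivative[OF bounded_linear_scaleR_right]
        bounded_bilinear.has_vector_derivative[OF bilinear_cross[unfolded bilinear_conv_bounded_bilinear]]
        acceleration[OF t])
  moreover have "\<xi> t \<times> \<xi>'' t = - geod_curv (\<xi> t) (\<xi>' t) (\<xi>'' t) *\<^sub>R \<xi>' t"
    unfolding geod_curv_eq_triple_product
    using unit_speed[OF t] inner_position_velocity[OF t] inner_velocity_acceleration[OF t]
    by (intro cross_eq_scaleR_if_orthogonal) (auto simp: norm_eq_1)
  ultimately show ?thesis
    by (simp add: algebra_simps)
qed

lemma circle_axis_constant_if_geod_curv_constant:
  assumes "a < b" and \<kappa>: "\<And>t. t \<in> {a<..<b} \<Longrightarrow> geod_curv (\<xi> t) (\<xi>' t) (\<xi>'' t) = k"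
  obtains m where "norm m = sqrt (1 + k\<^sup>2)"
    and "\<And>t. t \<in> {a<..<b} \<Longrightarrow> circle_axis k (\<xi> t) (\<xi>' t) = m"
    and "\<And>t. t \<in> {a<..<b} \<Longrightarrow> \<xi> t \<bullet> m = k"
proof -
  obtain m where m: "\<And>t. t \<in> {a<..<b} \<Longrightarrow> circle_axis k (\<xi> t) (\<xi>' t) = m"
  proof (rule has_vector_derivative_zero_constant)
    fix t assume "t \<in> {a<..<b}"
    then show "((\<lambda>t. circle_axis k (\<xi> t) (\<xi>' t)) has_vector_derivative 0) (at t within {a<..<b})"
      using has_vector_derivative_circle_axis[of t k] \<kappa>
      by (simp add: has_vector_derivative_at_within)
  qed auto
  moreover have "(a + b) / 2 \<in> {a<..<b}"
    using \<open>a < b\<close> by simp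
  ultimately have "norm m = sqrt (1 + k\<^sup>2)"
    using norm_circle_axis on_sphere unit_speed inner_position_velocity by metis
  moreover have "\<xi> t \<bullet> m = k" if "t \<in> {a<..<b}" for t
    using inner_position_circle_axis[OF on_sphere[OF that], of k "\<xi>' t"] m[OF that] by simp
  ultimately show thesis
    using that m by blast
qed

lemma geod_curv_eq_if_sph_ang_mom_affine:
  assumes "continuous_on {a<..<b} \<xi>''"
    and nonconst: "\<And>u v. a \<le> u \<Longrightarrow> u < v \<Longrightarrow> v \<le> b \<Longrightarrow> \<not> (\<lambda>t. \<xi> t $ 3) constant_on {u<..<v}"
    and K: "\<And>t. t \<in> {a<..<b} \<Longrightarrow> sph_ang_mom (\<xi> t) (\<xi>' t) = k * \<xi> t $ 3 + c"
    and t: "t \<in> {a<..<b}"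
  shows "geod_curv (\<xi> t) (\<xi>' t) (\<xi>'' t) = k"
proof (rule eq_on_interval_if_derivative_vanishes_off_eq[OF _ _ _ nonconst t])
  have "continuous_on {a<..<b} \<xi>"
    by (rule continuous_at_imp_continuous_on) (use velocity has_vector_derivative_continuous in blast)
  moreover have "continuous_on {a<..<b} \<xi>'"
    by (rule continuous_at_imp_continuous_on) (use acceleration has_vector_derivative_continuous in blast)
  ultimately show "continuous_on {a<..<b} (\<lambda>t. geod_curv (\<xi> t) (\<xi>' t) (\<xi>'' t))"
    using assms(1) unfolding geod_curv_eq_triple_product
    by (intro continuous_on_inner continuous_on_cross)
next
  fix s assume s: "s \<in> {a<..<b}"
  have axis3: "circle_axis k (\<xi> t) (\<xi>' t) $ 3 = - c" if "t \<in> {a<..<b}" for t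
    using K[OF that] sph_ang_mom_eq_circle_axis[of "\<xi> t" "\<xi>' t" k] by simp
  show "((\<lambda>t. \<xi> t $ 3) has_real_derivative \<xi>' s $ 3) (at s)"
    unfolding has_real_derivative_iff_has_vector_derivative
    by (rule bounded_linear.has_vector_derivative[OF bounded_linear_vec_nth velocity[OF s]])
  have "((\<lambda>t. circle_axis k (\<xi> t) (\<xi>' t) $ 3)
          has_vector_derivative ((k - geod_curv (\<xi> s) (\<xi>' s) (\<xi>'' s)) *\<^sub>R \<xi>' s) $ 3) (at s)"
    by (rule bounded_linear.has_vector_derivative[OF bounded_linear_vec_nth
          has_vector_derivative_circle_axis[OF s]])
  then have "((k - geod_curv (\<xi> s) (\<xi>' s) (\<xi>'' s)) *\<^sub>R \<xi>' s) $ 3 = 0"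
    by (rule has_vector_derivative_eq_0_if_constant_on_open[where S = "{a<..<b}" and c = "- c"])
      (use axis3 s in auto)
  then show "geod_curv (\<xi> s) (\<xi>' s) (\<xi>'' s) \<noteq> k \<Longrightarrow> \<xi>' s $ 3 = 0"
    by simp
qed

lemma circle_if_sph_ang_mom_affine:
  assumes "a < b" "continuous_on {a<..<b} \<xi>''"
    and nonconst: "\<And>u v. a \<le> u \<Longrightarrow> u < v \<Longrightarrow> v \<le> b \<Longrightarrow> \<not> (\<lambda>t. \<xi> t $ 3) constant_on {u<..<v}"
    and K: "\<forall>t\<in>{a<..<b}. sph_ang_mom (\<xi> t) (\<xi>' t) = k * \<xi> t $ 3 + c"
  shows "(\<forall>t\<in>{a<..<b}. geod_curv (\<xi> t) (\<xi>' t) (\<xi>'' t) = k) \<and>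
    (\<exists>n::real^3. norm n = 1 \<and> n $ 3 = - c / sqrt (1 + k\<^sup>2) \<and>
      (\<forall>t\<in>{a<..<b}. \<xi> t \<bullet> n = k / sqrt (1 + k\<^sup>2)))"
proof -
  have \<kappa>: "\<forall>t\<in>{a<..<b}. geod_curv (\<xi> t) (\<xi>' t) (\<xi>'' t) = k"
    using geod_curv_eq_if_sph_ang_mom_affine[OF assms(2) nonconst] K by blast
  then obtain m where "norm m = sqrt (1 + k\<^sup>2)"
    and m: "\<And>t. t \<in> {a<..<b} \<Longrightarrow> circle_axis k (\<xi> t) (\<xi>' t) = m"
    and on_circle: "\<And>t. t \<in> {a<..<b} \<Longrightarrow> \<xi> t \<bullet> m = k"
    using circle_axis_constant_if_geod_curv_constant \<open>a < b\<close> by blast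
  have mid: "(a + b) / 2 \<in> {a<..<b}"
    using \<open>a < b\<close> by simp
  have "m $ 3 = - c"
    using K[rule_format, OF mid] m[OF mid] sph_ang_mom_eq_circle_axis[of _ _ k] by simp
  define s where "s = sqrt (1 + k\<^sup>2)"
  have "s > 0"
    unfolding s_def by (simp add: add_pos_nonneg)
  then have "norm (m /\<^sub>R s) = 1 \<and> (m /\<^sub>R s) $ 3 = - c / s \<and> (\<forall>t\<in>{a<..<b}. \<xi> t \<bullet> (m /\<^sub>R s) = k / s)"
    using \<open>norm m = sqrt (1 + k\<^sup>2)\<close> \<open>m $ 3 = - c\<close> on_circle
    by (simp add: divide_inverse_commute flip: s_def)
  with \<kappa> show ?thesis
    unfolding s_def by blast
qed

lemma sph_ang_mom_affine_if_geod_curv_constant: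
  assumes "a < b" "\<forall>t\<in>{a<..<b}. geod_curv (\<xi> t) (\<xi>' t) (\<xi>'' t) = k"
    and nonconst: "\<not> (\<lambda>t. \<xi> t $ 3) constant_on {a<..<b}"
  shows "\<exists>c'. \<bar>c'\<bar> < sqrt (1 + k\<^sup>2) \<and>
    (\<forall>t\<in>{a<..<b}. sph_ang_mom (\<xi> t) (\<xi>' t) = k * \<xi> t $ 3 + c')"
proof -
  obtain m where "norm m = sqrt (1 + k\<^sup>2)"
    and "\<And>t. t \<in> {a<..<b} \<Longrightarrow> circle_axis k (\<xi> t) (\<xi>' t) = m"
    and on_circle: "\<And>t. t \<in> {a<..<b} \<Longrightarrow> \<xi> t \<bullet> m = k"
    using circle_axis_constant_if_geod_curv_constant assms(1,2) by blast
  moreover have "\<bar>m $ 3\<bar> < norm m"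
  proof (rule abs_component_less_norm_if_nonconstant[OF _ on_circle nonconst])
    show "m \<noteq> 0"
      using \<open>norm m = sqrt (1 + k\<^sup>2)\<close> by (auto simp: add_nonneg_eq_0_iff)
  qed
  ultimately show ?thesis
    using sph_ang_mom_eq_circle_axis[of _ _ k]
    by (intro exI[of _ "- m $ 3"]) auto
qed

end

theorem corollary3p4:
  fixes k0 c a b :: real
    and \<xi> \<xi>' \<xi>'' :: "real \<Rightarrow> real^3"
  assumes k0: "k0 \<ge> 0"
    and c: "\<bar>c\<bar> < sqrt (1 + k0\<^sup>2)"
    and ab: "a < b"
    and d1: "\<forall>t\<in>{a<..<b}. (\<xi> has_vector_derivative \<xi>' t) (at t)"
    and d2: "\<forall>t\<in>{a<..<b}. (\<xi>' has_vector_derivative \<xi>'' t) (at t)"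
    and cont2: "continuous_on {a<..<b} \<xi>''"
    and sphere: "\<forall>t\<in>{a<..<b}. norm (\<xi> t) = 1"
    and arclength: "\<forall>t\<in>{a<..<b}. norm (\<xi>' t) = 1"
    and nonparallel: "\<forall>u v. a \<le> u \<and> u < v \<and> v \<le> b \<longrightarrow>
                        (\<exists>s\<in>{u<..<v}. \<exists>t\<in>{u<..<v}. \<xi> s $ 3 \<noteq> \<xi> t $ 3)"
  shows "((\<forall>t\<in>{a<..<b}. sph_ang_mom (\<xi> t) (\<xi>' t) = k0 * \<xi> t $ 3 + c) \<longrightarrow>
            (\<forall>t\<in>{a<..<b}. geod_curv (\<xi> t) (\<xi>' t) (\<xi>'' t) = k0) \<and>
            (\<exists>n::real^3. norm n = 1 \<and> n $ 3 = - c / sqrt (1 + k0\<^sup>2) \<and>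
               (\<forall>t\<in>{a<..<b}. \<xi> t \<bullet> n = k0 / sqrt (1 + k0\<^sup>2))))
       \<and> (((\<forall>t\<in>{a<..<b}. geod_curv (\<xi> t) (\<xi>' t) (\<xi>'' t) = k0) \<and>
            (\<exists>n::real^3. norm n = 1 \<and> \<bar>n $ 3\<bar> < 1 \<and>
               (\<forall>t\<in>{a<..<b}. \<xi> t \<bullet> n = k0 / sqrt (1 + k0\<^sup>2))))
          \<longrightarrow> (\<exists>c'. \<bar>c'\<bar> < sqrt (1 + k0\<^sup>2) \<and>
                   (\<forall>t\<in>{a<..<b}. sph_ang_mom (\<xi> t) (\<xi>' t) = k0 * \<xi> t $ 3 + c')))"
proof -
  interpret unit_speed_spherical_curve a b \<xi> \<xi>' \<xi>''
    using d1 d2 sphere arclength by unfold_locales auto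
  have nonconst: "\<not> (\<lambda>t. \<xi> t $ 3) constant_on {u<..<v}" if "a \<le> u" "u < v" "v \<le> b" for u v
    using nonparallel that unfolding constant_on_def by metis
  show ?thesis
    using circle_if_sph_ang_mom_affine[OF ab cont2 nonconst]
      sph_ang_mom_affine_if_geod_curv_constant[OF ab _ nonconst[OF order_refl ab order_refl]]
    by blast
qed

end
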